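(* Let $X$ be a real Banach space ordered by a generating and normal cone $K$. Let $A$ be a bounded linear operator on $X$ with $A(K)\subseteq K$, and suppose $A=T+F$, where $T$ and $F$ are bounded linear operators on $X$ with $T(K)\subseteq K$, $F(K)\subseteq K$, and $r(T)<1$. Define $R_0:=r\big(F(I-T)^{-1}\big)$ and suppose $R_0>0$. Then $r\!\left(T+\tfrac{1}{R_0}F\right)=1$.
   Context: A cone $K\subseteq X$ is a closed convex set such that $\alpha x\in K$ whenever $x\in K,\ \alpha\ge 0$, and such that $x\in K$, $-x\in K$ imply $x=0$. $K$ is generating if $X=K-K$, and normal if there is $\gamma>0$ such that $0\le x\le y$ implies $\|x\|\le\gamma\|y\|$, where $x\le y$ means $y-x\in K$. An operator $B$ is $K$-preserving (cone-preserving) if $B(K)\subseteq K$. For a bounded operator $B$ on a real Banach space, its spectrum $\sigma(B)$ and spectral radius $r(B)=\sup\{|\lambda|:\lambda\in\sigma(B)\}$ are those of its complexification on $X+iX$. Since $r(T)<1$, $I-T$ is invertible with bounded inverse. *)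

theory Defs
  imports "HOL-Analysis.Analysis"
begin

definition is_cone :: "'a::real_normed_vector set \<Rightarrow> bool" where
  "is_cone K \<longleftrightarrow> closed K \<and> convex K \<and>
     (\<forall>x\<in>K. \<forall>\<alpha>::real. \<alpha> \<ge> 0 \<longrightarrow> \<alpha> *\<^sub>R x \<in> K) \<and>
     (\<forall>x. x \<in> K \<and> - x \<in> K \<longrightarrow> x = 0)"

definition generating_cone :: "'a::real_normed_vector set \<Rightarrow> bool" where
  "generating_cone K \<longleftrightarrow> (\<forall>z. \<exists>x\<in>K. \<exists>y\<in>K. z = x - y)"

definition normal_cone :: "'a::real_normed_vector set \<Rightarrow> bool" where
  "normal_cone K \<longleftrightarrow> (\<exists>\<gamma>>0. \<forall>x y. x \<in> K \<and> y - x \<in> K \<longrightarrow> norm x \<le> \<gamma> * norm y)"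

definition cone_preserving :: "('a::real_normed_vector \<Rightarrow>\<^sub>L 'a) \<Rightarrow> 'a set \<Rightarrow> bool" where
  "cone_preserving B K \<longleftrightarrow> (\<forall>x\<in>K. blinfun_apply B x \<in> K)"

text \<open>The complexification X + iX is represented as X \<times> X (pair (x,y) = x + i y).
  cplx_shift B c is the operator B_C - c I on the complexification.\<close>

definition cplx_shift :: "('a::real_normed_vector \<Rightarrow>\<^sub>L 'a) \<Rightarrow> complex \<Rightarrow> ('a \<times> 'a \<Rightarrow> 'a \<times> 'a)" where
  "cplx_shift B c = (\<lambda>(x, y).
     (blinfun_apply B x - Re c *\<^sub>R x + Im c *\<^sub>R y,
      blinfun_apply B y - Re c *\<^sub>R y - Im c *\<^sub>R x))"

definition op_spectrum :: "('a::real_normed_vector \<Rightarrow>\<^sub>L 'a) \<Rightarrow> complex set" where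
  "op_spectrum B = {c. \<not> (\<exists>g. bounded_linear g \<and>
       (\<forall>z. g (cplx_shift B c z) = z) \<and> (\<forall>z. cplx_shift B c (g z) = z))}"

text \<open>Spectral radius; the 0 is only relevant for the trivial space (empty spectrum).\<close>
definition spectral_radius :: "('a::real_normed_vector \<Rightarrow>\<^sub>L 'a) \<Rightarrow> real" where
  "spectral_radius B = Sup (insert 0 (cmod ` op_spectrum B))"

definition op_inverse :: "('a::real_normed_vector \<Rightarrow>\<^sub>L 'a) \<Rightarrow> ('a \<Rightarrow>\<^sub>L 'a)" where
  "op_inverse S = (THE R. R o\<^sub>L S = id_blinfun \<and> S o\<^sub>L R = id_blinfun)"

end

theory Submission
  imports Defs
begin

text \<open>Write W = (I - T)^-1 and \<rho> = r(F W). For positive operators on a normal generating cone, s - B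
with s > 0 has a positive inverse iff s > r(B), and 0 <= B <= C implies r(B) <= r(C); both rest on the
bound 0 <= C^n x <= s^(n+1) (s - C)^-1 x for x >= 0, normality and uniform boundedness.
Put F' = F / \<rho>, so that r(F' W) <= 1. If r(T + F') < 1, then (I - T)(I - T - F')^-1 is a positive
inverse of I - F' W, whence r(F W) < \<rho>. If l > 1, then F' (l - T)^-1 <= F' W / l has spectral radius
below 1, and (l - T)^-1 (I - F' (l - T)^-1)^-1 is a positive inverse of l - T - F', whence
r(T + F') < l.\<close>

definition blinfun_pow :: "('a::real_normed_vector \<Rightarrow>\<^sub>L 'a) \<Rightarrow> nat \<Rightarrow> ('a \<Rightarrow>\<^sub>L 'a)" where
  "blinfun_pow B n = ((o\<^sub>L) B ^^ n) id_blinfun"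

lemma blinfun_pow_0 [simp]: "blinfun_pow B 0 = id_blinfun"
  by (simp add: blinfun_pow_def)

lemma blinfun_pow_Suc [simp]: "blinfun_pow B (Suc n) x = B (blinfun_pow B n x)"
  by (simp add: blinfun_pow_def)

lemma blinfun_pow_Suc': "blinfun_pow B (Suc n) x = blinfun_pow B n (B x)"
  by (induction n arbitrary: x) auto

lemma norm_blinfun_pow_le: "norm (blinfun_pow B n) \<le> norm B ^ n"
proof (induction n)
  case 0
  show ?case by (simp add: norm_blinfun_id_le)
next
  case (Suc n)
  have "blinfun_pow B (Suc n) = B o\<^sub>L blinfun_pow B n"
    by (simp add: blinfun_eqI)
  then have "norm (blinfun_pow B (Suc n)) \<le> norm B * norm (blinfun_pow B n)"
    by (simp add: norm_blinfun_compose)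
  also have "\<dots> \<le> norm B ^ Suc n"
    using Suc by (simp add: mult_left_mono)
  finally show ?case .
qed

lemma blinfun_shift_apply [simp]: "(t *\<^sub>R id_blinfun - B) x = t *\<^sub>R x - B x"
  by (simp add: blinfun.diff_left blinfun.scaleR_left)

lemma blinfun_id_diff_apply: "(id_blinfun - B) x = x - B x"
  by (simp add: blinfun.diff_left)

definition is_inverse_blinfun :: "('a::real_normed_vector \<Rightarrow>\<^sub>L 'a) \<Rightarrow> ('a \<Rightarrow>\<^sub>L 'a) \<Rightarrow> bool" where
  "is_inverse_blinfun R S \<longleftrightarrow> R o\<^sub>L S = id_blinfun \<and> S o\<^sub>L R = id_blinfun"

lemma is_inverse_blinfunI:
  fixes R S :: "'a::real_normed_vector \<Rightarrow>\<^sub>L 'a"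
  assumes "\<And>x. R (S x) = x" and "\<And>x. S (R x) = x"
  shows "is_inverse_blinfun R S"
  using assms by (auto simp: is_inverse_blinfun_def intro!: blinfun_eqI)

lemma is_inverse_blinfunD:
  assumes "is_inverse_blinfun R S"
  shows "R (S x) = x" and "S (R x) = x"
  using assms unfolding is_inverse_blinfun_def by (metis blinfun_apply_blinfun_compose id_blinfun.rep_eq)+

lemma op_inverse_eqI:
  assumes "is_inverse_blinfun R S"
  shows "op_inverse S = R"
  unfolding op_inverse_def
proof (rule the_equality)
  show "R o\<^sub>L S = id_blinfun \<and> S o\<^sub>L R = id_blinfun"
    using assms by (simp add: is_inverse_blinfun_def)
next
  fix R' assume "R' o\<^sub>L S = id_blinfun \<and> S o\<^sub>L R' = id_blinfun"
  then have "R' (S (R x)) = R x" "R' (S (R x)) = R' x" for x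
    using is_inverse_blinfunD[OF assms] by (metis blinfun_apply_blinfun_compose id_blinfun.rep_eq)+
  then show "R' = R"
    by (metis blinfun_eqI)
qed

definition resolvent :: "('a::real_normed_vector \<Rightarrow>\<^sub>L 'a) \<Rightarrow> real \<Rightarrow> ('a \<Rightarrow>\<^sub>L 'a)" where
  "resolvent B t = op_inverse (t *\<^sub>R id_blinfun - B)"

lemma cone_scaleR: "is_cone K \<Longrightarrow> x \<in> K \<Longrightarrow> 0 \<le> a \<Longrightarrow> a *\<^sub>R x \<in> K"
  by (auto simp: is_cone_def)

lemma cone_add:
  assumes "is_cone K" "x \<in> K" "y \<in> K"
  shows "x + y \<in> K"
proof -
  have "(1/2) *\<^sub>R x + (1/2) *\<^sub>R y \<in> K"
    using assms by (simp add: is_cone_def convex_def)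
  from cone_scaleR[OF assms(1) this, of 2] show ?thesis
    by (simp add: scaleR_add_right)
qed

lemma zero_mem_generating_cone: "is_cone K \<Longrightarrow> generating_cone K \<Longrightarrow> 0 \<in> K"
  unfolding generating_cone_def using cone_scaleR[of K _ 0] by fastforce

lemma cone_sum:
  assumes "is_cone K" "0 \<in> K" "\<And>i. i \<in> I \<Longrightarrow> f i \<in> K"
  shows "sum f I \<in> K"
  using assms(3)
  by (induction I rule: infinite_finite_induct) (auto simp: assms(2) cone_add[OF assms(1)])

lemma cone_suminf:
  assumes "is_cone K" "0 \<in> K" "summable f" "\<And>i. f i \<in> K"
  shows "suminf f \<in> K"
proof (rule closed_sequentially[OF _ _ summable_LIMSEQ[OF assms(3)]])
  show "closed K"
    using assms(1) by (simp add: is_cone_def)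
  show "(\<Sum>i<n. f i) \<in> K" for n
    by (rule cone_sum[OF assms(1,2)]) (use assms(4) in auto)
qed

lemma cone_preservingD: "cone_preserving B K \<Longrightarrow> x \<in> K \<Longrightarrow> B x \<in> K"
  by (simp add: cone_preserving_def)

lemma cone_preserving_compose:
  "cone_preserving B K \<Longrightarrow> cone_preserving C K \<Longrightarrow> cone_preserving (B o\<^sub>L C) K"
  by (simp add: cone_preserving_def)

lemma cone_preserving_add:
  "is_cone K \<Longrightarrow> cone_preserving B K \<Longrightarrow> cone_preserving C K \<Longrightarrow> cone_preserving (B + C) K"
  by (simp add: cone_preserving_def blinfun.add_left cone_add)

lemma cone_preserving_scaleR:
  "is_cone K \<Longrightarrow> cone_preserving B K \<Longrightarrow> 0 \<le> a \<Longrightarrow> cone_preserving (a *\<^sub>R B) K"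
  by (simp add: cone_preserving_def blinfun.scaleR_left cone_scaleR)

lemma cone_preserving_pow: "cone_preserving B K \<Longrightarrow> x \<in> K \<Longrightarrow> blinfun_pow B n x \<in> K"
  by (induction n) (auto simp: cone_preserving_def)

section \<open>Neumann series\<close>

lemma neumann_series:
  fixes M :: "'a::banach \<Rightarrow>\<^sub>L 'a"
  assumes bound: "\<And>n. norm (blinfun_pow M n) \<le> c * q ^ n" and q: "0 \<le> q" "q < 1"
  shows "summable (blinfun_pow M)"
    and "is_inverse_blinfun (\<Sum>n. blinfun_pow M n) (id_blinfun - M)"
    and "norm (\<Sum>n. blinfun_pow M n) \<le> c / (1 - q)"
proof -
  have geom: "summable (\<lambda>n. c * q ^ n)"
    using q by (simp add: summable_geometric)
  have norm_summable: "summable (\<lambda>n. norm (blinfun_pow M n))"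
    by (rule summable_comparison_test[OF _ geom]) (use bound in auto)
  then show summable: "summable (blinfun_pow M)"
    by (rule summable_norm_cancel)
  define V where "V = (\<Sum>n. blinfun_pow M n)"
  have V_apply: "V x = (\<Sum>n. blinfun_pow M n x)" for x
    unfolding V_def using bounded_linear.suminf[OF blinfun.bounded_linear_left summable] by simp
  have summable_apply: "summable (\<lambda>n. blinfun_pow M n x)" for x
    using bounded_linear.summable[OF blinfun.bounded_linear_left summable] .
  have shift: "(\<Sum>n. M (blinfun_pow M n x)) = V x - x" for x
    using suminf_split_head[OF summable_apply] by (simp add: V_apply)
  show "is_inverse_blinfun V (id_blinfun - M)"
  proof (rule is_inverse_blinfunI)
    fix x
    have "V (M x) = (\<Sum>n. M (blinfun_pow M n x))"
      by (simp only: V_apply flip: blinfun_pow_Suc' blinfun_pow_Suc)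
    then show "V ((id_blinfun - M) x) = x"
      by (simp add: blinfun.diff_left blinfun.diff_right shift)
    have "M (V x) = (\<Sum>n. M (blinfun_pow M n x))"
      unfolding V_apply by (rule bounded_linear.suminf[OF blinfun.bounded_linear_right summable_apply])
    then show "(id_blinfun - M) (V x) = x"
      by (simp add: blinfun.diff_left shift)
  qed
  have "norm V \<le> (\<Sum>n. norm (blinfun_pow M n))"
    unfolding V_def by (rule summable_norm[OF norm_summable])
  also have "\<dots> \<le> (\<Sum>n. c * q ^ n)"
    by (rule suminf_le[OF bound norm_summable geom])
  also have "\<dots> = c / (1 - q)"
    using q by (simp add: suminf_mult suminf_geometric summable_geometric)
  finally show "norm V \<le> c / (1 - q)" .
qed

lemma cone_preserving_neumann_series:
  fixes M :: "'a::banach \<Rightarrow>\<^sub>L 'a"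
  assumes "is_cone K" "0 \<in> K" "cone_preserving M K" "summable (blinfun_pow M)"
  shows "cone_preserving (\<Sum>n. blinfun_pow M n) K"
  unfolding cone_preserving_def
proof
  fix x assume "x \<in> K"
  have "(\<Sum>n. blinfun_pow M n) x = (\<Sum>n. blinfun_pow M n x)"
    using bounded_linear.suminf[OF blinfun.bounded_linear_left assms(4)] by simp
  also have "\<dots> \<in> K"
    using assms \<open>x \<in> K\<close> bounded_linear.summable[OF blinfun.bounded_linear_left assms(4)]
    by (intro cone_suminf cone_preserving_pow) auto
  finally show "(\<Sum>n. blinfun_pow M n) x \<in> K" .
qed

lemma inverse_perturb:
  fixes R A E :: "'a::banach \<Rightarrow>\<^sub>L 'a"
  assumes inv: "is_inverse_blinfun R A" and small: "norm R * norm E < 1"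
  defines "R' \<equiv> (\<Sum>n. blinfun_pow (R o\<^sub>L E) n) o\<^sub>L R"
  shows "is_inverse_blinfun R' (A - E)"
    and "norm R' \<le> norm R / (1 - norm R * norm E)"
    and "is_cone K \<Longrightarrow> 0 \<in> K \<Longrightarrow> cone_preserving R K \<Longrightarrow> cone_preserving E K \<Longrightarrow>
      cone_preserving R' K"
proof -
  define q where "q = norm R * norm E"
  define V where "V = (\<Sum>n. blinfun_pow (R o\<^sub>L E) n)"
  have q: "0 \<le> q" "q < 1"
    using small by (simp_all add: q_def)
  have "norm (blinfun_pow (R o\<^sub>L E) n) \<le> 1 * q ^ n" for n
    using norm_blinfun_pow_le[of "R o\<^sub>L E" n] norm_blinfun_compose[of R E]
    by (simp add: q_def order_trans power_mono)
  note V = neumann_series[OF this q, folded V_def, unfolded q_def]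
  have A_diff: "(A - E) y = A ((id_blinfun - (R o\<^sub>L E)) y)" for y
    using is_inverse_blinfunD(2)[OF inv, of "E y"] by (simp add: blinfun.diff_left blinfun.diff_right)
  show "is_inverse_blinfun R' (A - E)"
  proof (rule is_inverse_blinfunI)
    fix x
    show "R' ((A - E) x) = x"
      by (simp add: R'_def V_def[symmetric] A_diff is_inverse_blinfunD[OF inv] is_inverse_blinfunD[OF V(2)])
    show "(A - E) (R' x) = x"
      by (simp only: R'_def V_def[symmetric] A_diff blinfun_apply_blinfun_compose
          is_inverse_blinfunD[OF inv] is_inverse_blinfunD[OF V(2)])
  qed
  have "norm R' \<le> norm V * norm R"
    unfolding R'_def V_def by (rule norm_blinfun_compose)
  also have "\<dots> \<le> 1 / (1 - norm R * norm E) * norm R"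
    using V(3) by (rule mult_right_mono) simp
  finally show "norm R' \<le> norm R / (1 - norm R * norm E)"
    by simp
  show "cone_preserving R' K"
    if "is_cone K" "0 \<in> K" "cone_preserving R K" "cone_preserving E K"
    unfolding R'_def
    using that V(1) by (intro cone_preserving_compose cone_preserving_neumann_series) auto
qed

section \<open>Uniform boundedness\<close>

lemma uniform_boundedness:
  fixes f :: "nat \<Rightarrow> ('a::banach \<Rightarrow>\<^sub>L 'b::real_normed_vector)"
  assumes pointwise: "\<And>x. \<exists>c. \<forall>n. norm (f n x) \<le> c"
  shows "\<exists>c. \<forall>n. norm (f n) \<le> c"
proof -
  define E where "E k = {x. \<forall>n. norm (f n x) \<le> real k}" for k :: nat
  have closed_E: "closed (E k)" for k
  proof -
    have "E k = (\<Inter>n. {x. norm (f n x) \<le> real k})"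
      by (auto simp: E_def)
    then show ?thesis
      by (auto intro!: closed_INT closed_Collect_le continuous_intros)
  qed
  have "x \<in> \<Union>(range E)" for x
  proof -
    obtain c where "\<forall>n. norm (f n x) \<le> c"
      using pointwise by blast
    moreover obtain k where "c \<le> real k"
      using real_arch_simple by blast
    ultimately show ?thesis
      unfolding E_def by (auto intro: order_trans)
  qed
  then have union: "\<Union>(range E) = UNIV"
    by auto
  have "\<exists>k. interior (E k) \<noteq> {}"
  proof (rule ccontr)
    assume "\<not> ?thesis"
    then have "euclidean interior_of \<Union>(range E) = {}"
      by (intro Baire_category_alt) (auto simp: completely_metrizable_space_euclidean closed_E)
    with union show False
      by simp
  qed
  then obtain k x0 r where r: "r > 0" "ball x0 r \<subseteq> E k"
    by (meson equals0I mem_interior)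
  have "norm (f n) \<le> 4 * real k / r" for n
  proof (rule norm_blinfun_bound)
    show "0 \<le> 4 * real k / r"
      using r by simp
    fix y :: 'a
    show "norm (f n y) \<le> 4 * real k / r * norm y"
    proof (cases "y = 0")
      case False
      define a where "a = r / (2 * norm y)"
      have "x0 + a *\<^sub>R y \<in> E k" "x0 \<in> E k"
        using r False by (auto intro!: subsetD[OF r(2)] simp: a_def dist_norm)
      then have "norm (f n (x0 + a *\<^sub>R y)) \<le> k" "norm (f n x0) \<le> k"
        by (auto simp: E_def)
      moreover have "norm (a *\<^sub>R f n y) = norm (f n (x0 + a *\<^sub>R y) - f n x0)"
        by (simp add: blinfun.add_right blinfun.scaleR_right)
      ultimately have "norm (a *\<^sub>R f n y) \<le> 2 * real k"
        using norm_triangle_ineq4[of "f n (x0 + a *\<^sub>R y)" "f n x0"] by linarith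
      then show ?thesis
        using r False by (simp add: a_def field_simps)
    qed simp
  qed
  then show ?thesis
    by blast
qed

section \<open>Complexification and the spectrum\<close>

lemma norm_fst_snd_le: "norm (fst z) \<le> norm z" "norm (snd z) \<le> norm z"
  using norm_fst_le[of "fst z" "snd z"] norm_snd_le[of "snd z" "fst z"] by simp_all

definition cplx_scale :: "complex \<Rightarrow> 'a::real_normed_vector \<times> 'a \<Rightarrow> 'a \<times> 'a" where
  "cplx_scale a z = (Re a *\<^sub>R fst z - Im a *\<^sub>R snd z, Im a *\<^sub>R fst z + Re a *\<^sub>R snd z)"

definition cplx_op :: "('a::real_normed_vector \<Rightarrow>\<^sub>L 'a) \<Rightarrow> 'a \<times> 'a \<Rightarrow> 'a \<times> 'a" where
  "cplx_op B z = (B (fst z), B (snd z))"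

lemma cplx_shift_eq: "cplx_shift B c z = cplx_op B z - cplx_scale c z"
  by (cases z) (simp add: cplx_shift_def cplx_op_def cplx_scale_def algebra_simps)

lemma cplx_scale_mult: "cplx_scale a (cplx_scale b z) = cplx_scale (a * b) z"
  by (simp add: cplx_scale_def algebra_simps scaleR_add_right scaleR_diff_right)

lemma cplx_scale_1 [simp]: "cplx_scale 1 z = z"
  by (simp add: cplx_scale_def)

lemma cplx_scale_minus: "cplx_scale a (- z) = - cplx_scale a z"
  by (simp add: cplx_scale_def algebra_simps)

lemma cplx_scale_diff: "cplx_scale a (z - w) = cplx_scale a z - cplx_scale a w"
  by (simp add: cplx_scale_def algebra_simps scaleR_diff_right)

lemma norm_cplx_scale_le: "norm (cplx_scale a z) \<le> 4 * cmod a * norm z"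
proof -
  have component: "norm (u *\<^sub>R x + v *\<^sub>R y) \<le> 2 * cmod a * norm z"
    if "\<bar>u\<bar> \<le> cmod a" "\<bar>v\<bar> \<le> cmod a" "norm x \<le> norm z" "norm y \<le> norm z" for u v x y
  proof -
    have "norm (u *\<^sub>R x + v *\<^sub>R y) \<le> \<bar>u\<bar> * norm x + \<bar>v\<bar> * norm y"
      using norm_triangle_ineq[of "u *\<^sub>R x" "v *\<^sub>R y"] by simp
    also have "\<dots> \<le> cmod a * norm z + cmod a * norm z"
      using that by (intro add_mono mult_mono) auto
    finally show ?thesis
      by simp
  qed
  have "norm (cplx_scale a z) \<le> norm (Re a *\<^sub>R fst z + (- Im a) *\<^sub>R snd z) + norm (Im a *\<^sub>R fst z + Re a *\<^sub>R snd z)"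
    unfolding cplx_scale_def by (rule order_trans[OF norm_Pair_le]) simp
  also have "\<dots> \<le> 2 * cmod a * norm z + 2 * cmod a * norm z"
    by (intro add_mono component) (auto simp: abs_Re_le_cmod abs_Im_le_cmod norm_fst_snd_le)
  finally show ?thesis
    by simp
qed

lemma bounded_linear_cplx_scale: "bounded_linear (cplx_scale a)"
proof (rule bounded_linear_intro[where K = "4 * cmod a"])
  show "norm (cplx_scale a z) \<le> norm z * (4 * cmod a)" for z
    using norm_cplx_scale_le[of a z] by (simp add: mult.commute)
qed (auto simp: cplx_scale_def algebra_simps scaleR_add_right)

lemma norm_cplx_op_le: "norm (cplx_op B z) \<le> 2 * norm B * norm z"
proof -
  have "norm (cplx_op B z) \<le> norm (B (fst z)) + norm (B (snd z))"
    by (simp add: cplx_op_def norm_Pair_le)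
  also have "\<dots> \<le> norm B * norm z + norm B * norm z"
    by (intro add_mono order_trans[OF norm_blinfun] mult_left_mono) (auto simp: norm_fst_snd_le)
  finally show ?thesis
    by linarith
qed

lemma bounded_linear_cplx_op: "bounded_linear (cplx_op B)"
proof (rule bounded_linear_intro[where K = "2 * norm B"])
  show "norm (cplx_op B z) \<le> norm z * (2 * norm B)" for z
    using norm_cplx_op_le[of B z] by (simp add: mult.commute)
qed (auto simp: cplx_op_def blinfun.add_right blinfun.scaleR_right)

lemma cplx_op_cplx_scale: "cplx_op B (cplx_scale a z) = cplx_scale a (cplx_op B z)"
  by (simp add: cplx_op_def cplx_scale_def blinfun.add_right blinfun.diff_right blinfun.scaleR_right)

lemma cplx_op_id [simp]: "cplx_op id_blinfun z = z"
  by (simp add: cplx_op_def)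

lemma cplx_op_pow_Suc: "cplx_op B (cplx_op (blinfun_pow B n) z) = cplx_op (blinfun_pow B (Suc n)) z"
  by (simp add: cplx_op_def)

definition cplx_scaled_op :: "complex \<Rightarrow> ('a::real_normed_vector \<Rightarrow>\<^sub>L 'a) \<Rightarrow> (('a \<times> 'a) \<Rightarrow>\<^sub>L ('a \<times> 'a))" where
  "cplx_scaled_op a B = Blinfun (\<lambda>z. cplx_scale a (cplx_op B z))"

lemma cplx_scaled_op_apply: "cplx_scaled_op a B z = cplx_scale a (cplx_op B z)"
  unfolding cplx_scaled_op_def
  by (simp add: bounded_linear_Blinfun_apply
      bounded_linear_compose[OF bounded_linear_cplx_scale bounded_linear_cplx_op])

lemma blinfun_pow_cplx_scaled_op:
  "blinfun_pow (cplx_scaled_op a B) n z = cplx_scale (a ^ n) (cplx_op (blinfun_pow B n) z)"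
  by (induction n) (simp_all add: cplx_scaled_op_apply cplx_op_cplx_scale cplx_scale_mult cplx_op_pow_Suc)

lemma norm_blinfun_pow_cplx_scaled_op:
  "norm (blinfun_pow (cplx_scaled_op a B) n) \<le> 8 * cmod a ^ n * norm (blinfun_pow B n)"
proof (rule norm_blinfun_bound)
  fix z
  have "norm (blinfun_pow (cplx_scaled_op a B) n z) \<le> 4 * cmod (a ^ n) * (2 * norm (blinfun_pow B n) * norm z)"
    unfolding blinfun_pow_cplx_scaled_op
    by (intro order_trans[OF norm_cplx_scale_le] mult_left_mono norm_cplx_op_le) auto
  then show "norm (blinfun_pow (cplx_scaled_op a B) n z) \<le> 8 * cmod a ^ n * norm (blinfun_pow B n) * norm z"
    by (simp add: norm_power)
qed simp

lemma notin_op_spectrum_pow_bound: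
  fixes B :: "'a::banach \<Rightarrow>\<^sub>L 'a"
  assumes bound: "\<And>n. norm (blinfun_pow B n) \<le> c * s ^ n" and s: "0 \<le> s" "s < cmod \<mu>"
  shows "\<mu> \<notin> op_spectrum B"
proof -
  have "\<mu> \<noteq> 0"
    using s by auto
  define q where "q = s / cmod \<mu>"
  have q: "0 \<le> q" "q < 1"
    using s by (auto simp: q_def divide_less_eq)
  define M where "M = cplx_scaled_op (inverse \<mu>) B"
  have "norm (blinfun_pow M n) \<le> (8 * c) * q ^ n" for n
  proof -
    have "norm (blinfun_pow M n) \<le> 8 * cmod (inverse \<mu>) ^ n * (c * s ^ n)"
      unfolding M_def by (intro order_trans[OF norm_blinfun_pow_cplx_scaled_op] mult_left_mono bound) simp
    also have "\<dots> = (8 * c) * q ^ n"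
      by (simp add: q_def norm_divide power_divide field_simps)
    finally show ?thesis .
  qed
  \<comment> \<open>On the complexification B - \<mu> = - \<mu> (I - M), and the Neumann series of M converges.\<close>
  from neumann_series(2)[OF this q] obtain V where V: "is_inverse_blinfun V (id_blinfun - M)"
    by blast
  have shift: "cplx_shift B \<mu> z = - cplx_scale \<mu> ((id_blinfun - M) z)" for z
    using \<open>\<mu> \<noteq> 0\<close>
    by (simp add: M_def cplx_shift_eq blinfun.diff_left cplx_scaled_op_apply cplx_scale_diff cplx_scale_mult)
  define g where "g z = - V (cplx_scale (inverse \<mu>) z)" for z
  have "bounded_linear g"
    unfolding g_def
    by (intro bounded_linear_minus bounded_linear_compose[OF blinfun.bounded_linear_right]
        bounded_linear_cplx_scale)
  moreover have "g (cplx_shift B \<mu> z) = z" for z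
    using \<open>\<mu> \<noteq> 0\<close> is_inverse_blinfunD(1)[OF V]
    by (simp add: g_def shift cplx_scale_minus cplx_scale_mult blinfun.minus_right)
  moreover have "cplx_shift B \<mu> (g z) = z" for z
    using \<open>\<mu> \<noteq> 0\<close> is_inverse_blinfunD(2)[OF V]
    by (simp add: g_def shift cplx_scale_minus cplx_scale_mult blinfun.minus_right)
  ultimately show ?thesis
    unfolding op_spectrum_def by blast
qed

lemma bdd_above_op_spectrum: "bdd_above (cmod ` op_spectrum (B :: 'a::banach \<Rightarrow>\<^sub>L 'a))"
proof (rule bdd_aboveI2)
  fix \<mu> assume "\<mu> \<in> op_spectrum B"
  then show "cmod \<mu> \<le> norm B"
    using notin_op_spectrum_pow_bound[of B 1 "norm B" \<mu>] norm_blinfun_pow_le[of B] by force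
qed

lemma spectral_radius_nonneg: "0 \<le> spectral_radius (B :: 'a::banach \<Rightarrow>\<^sub>L 'a)"
  unfolding spectral_radius_def by (rule cSup_upper) (use bdd_above_op_spectrum in auto)

lemma norm_le_spectral_radius:
  "\<mu> \<in> op_spectrum B \<Longrightarrow> cmod \<mu> \<le> spectral_radius (B :: 'a::banach \<Rightarrow>\<^sub>L 'a)"
  unfolding spectral_radius_def by (rule cSup_upper) (use bdd_above_op_spectrum in auto)

lemma spectral_radius_le_pow_bound:
  fixes B :: "'a::banach \<Rightarrow>\<^sub>L 'a"
  assumes "\<And>n. norm (blinfun_pow B n) \<le> c * s ^ n" "0 \<le> s"
  shows "spectral_radius B \<le> s"
  unfolding spectral_radius_def
proof (rule cSup_least)
  fix x assume "x \<in> insert 0 (cmod ` op_spectrum B)"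
  then show "x \<le> s"
    using notin_op_spectrum_pow_bound[OF assms] assms(2) by (force simp: not_less)
qed simp

lemma spectral_radius_scaleR_le:
  fixes B :: "'a::banach \<Rightarrow>\<^sub>L 'a"
  assumes "0 < a"
  shows "spectral_radius (a *\<^sub>R B) \<le> a * spectral_radius B"
  unfolding spectral_radius_def[of "a *\<^sub>R B"]
proof (rule cSup_least)
  fix x assume "x \<in> insert 0 (cmod ` op_spectrum (a *\<^sub>R B))"
  then consider "x = 0" | \<mu> where "\<mu> \<in> op_spectrum (a *\<^sub>R B)" "x = cmod \<mu>"
    by blast
  then show "x \<le> a * spectral_radius B"
  proof cases
    case 1
    then show ?thesis
      using assms spectral_radius_nonneg[of B] by simp
  next
    case 2
    have shift: "cplx_shift (a *\<^sub>R B) \<mu> z = a *\<^sub>R cplx_shift B (\<mu> / of_real a) z" for z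
      using assms by (cases z) (simp add: cplx_shift_def blinfun.scaleR_left algebra_simps)
    have "\<mu> / of_real a \<in> op_spectrum B"
    proof (rule ccontr)
      assume "\<mu> / of_real a \<notin> op_spectrum B"
      then obtain g where g: "bounded_linear g" "\<And>z. g (cplx_shift B (\<mu> / of_real a) z) = z"
        "\<And>z. cplx_shift B (\<mu> / of_real a) (g z) = z"
        unfolding op_spectrum_def by blast
      have "bounded_linear (\<lambda>z. g ((1 / a) *\<^sub>R z))"
        by (intro bounded_linear_compose[OF g(1)] bounded_linear_scaleR_right)
      moreover have "g ((1 / a) *\<^sub>R cplx_shift (a *\<^sub>R B) \<mu> z) = z" for z
        using assms by (simp add: shift g(2))
      moreover have "cplx_shift (a *\<^sub>R B) \<mu> (g ((1 / a) *\<^sub>R z)) = z" for z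
        using assms by (simp add: shift g(3))
      ultimately show False
        using 2 unfolding op_spectrum_def by blast
    qed
    then have "cmod (\<mu> / of_real a) \<le> spectral_radius B"
      by (rule norm_le_spectral_radius)
    then show ?thesis
      using 2 assms by (simp add: norm_divide field_simps)
  qed
qed simp

section \<open>Resolvents\<close>

lemma resolvent_eqI: "is_inverse_blinfun R (t *\<^sub>R id_blinfun - B) \<Longrightarrow> resolvent B t = R"
  unfolding resolvent_def by (rule op_inverse_eqI)

lemma resolvent_inverse:
  fixes B :: "'a::banach \<Rightarrow>\<^sub>L 'a"
  assumes "spectral_radius B < t"
  shows "is_inverse_blinfun (resolvent B t) (t *\<^sub>R id_blinfun - B)"
proof -
  have "complex_of_real t \<notin> op_spectrum B"
    using norm_le_spectral_radius[of "complex_of_real t" B] assms by auto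
  then obtain g where g: "bounded_linear g" "\<And>z. g (cplx_shift B (complex_of_real t) z) = z"
    "\<And>z. cplx_shift B (complex_of_real t) (g z) = z"
    unfolding op_spectrum_def by blast
  have shift: "cplx_shift B (complex_of_real t) (x, y) = (B x - t *\<^sub>R x, B y - t *\<^sub>R y)" for x y
    by (simp add: cplx_shift_def)
  \<comment> \<open>For real t the shift acts componentwise, so g restricted to X \<times> {0} inverts B - t on X.\<close>
  define R where "R x = fst (g (- x, 0))" for x
  have "bounded_linear R"
    unfolding R_def
    by (intro bounded_linear_compose[OF bounded_linear_fst] bounded_linear_compose[OF g(1)]
        bounded_linear_Pair bounded_linear_minus bounded_linear_ident bounded_linear_zero)
  moreover have "R (t *\<^sub>R x - B x) = x" for x
    using g(2)[of "(x, 0)"] by (simp add: R_def shift)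
  moreover have "t *\<^sub>R R x - B (R x) = x" for x
    using g(3)[of "(- x, 0)"] by (cases "g (- x, 0)") (simp add: R_def shift algebra_simps)
  ultimately have "is_inverse_blinfun (Blinfun R) (t *\<^sub>R id_blinfun - B)"
    by (intro is_inverse_blinfunI) (simp_all add: bounded_linear_Blinfun_apply)
  then show ?thesis
    by (simp add: resolvent_eqI)
qed

lemma resolvent_perturb:
  fixes B :: "'a::banach \<Rightarrow>\<^sub>L 'a"
  assumes inv: "is_inverse_blinfun (resolvent B t) (t *\<^sub>R id_blinfun - B)"
    and small: "\<bar>t - v\<bar> * norm (resolvent B t) < 1"
  shows "is_inverse_blinfun (resolvent B v) (v *\<^sub>R id_blinfun - B)"
    and "norm (resolvent B v) \<le> norm (resolvent B t) / (1 - \<bar>t - v\<bar> * norm (resolvent B t))"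
    and "is_cone K \<Longrightarrow> 0 \<in> K \<Longrightarrow> v \<le> t \<Longrightarrow> cone_preserving (resolvent B t) K \<Longrightarrow>
      cone_preserving (resolvent B v) K"
proof -
  define E :: "'a \<Rightarrow>\<^sub>L 'a" where "E = (t - v) *\<^sub>R id_blinfun"
  have "norm E \<le> \<bar>t - v\<bar>"
    using norm_blinfun_id_le[where 'a='a] by (simp add: E_def mult_left_le)
  then have E_small: "norm (resolvent B t) * norm E \<le> \<bar>t - v\<bar> * norm (resolvent B t)"
    by (simp add: mult.commute mult_right_mono)
  have "t *\<^sub>R id_blinfun - B - E = v *\<^sub>R id_blinfun - B"
    by (auto intro!: blinfun_eqI simp: E_def blinfun.diff_left blinfun.scaleR_left algebra_simps)
  note perturbed = inverse_perturb[OF inv order.strict_trans1[OF E_small small], unfolded this]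
  note resolvent_v = resolvent_eqI[OF perturbed(1)]
  show "is_inverse_blinfun (resolvent B v) (v *\<^sub>R id_blinfun - B)"
    using perturbed(1) by (simp add: resolvent_v)
  have "norm (resolvent B t) / (1 - norm (resolvent B t) * norm E)
      \<le> norm (resolvent B t) / (1 - \<bar>t - v\<bar> * norm (resolvent B t))"
    using E_small small by (intro divide_left_mono) auto
  then show "norm (resolvent B v) \<le> norm (resolvent B t) / (1 - \<bar>t - v\<bar> * norm (resolvent B t))"
    using perturbed(2) by (simp add: resolvent_v)
  show "cone_preserving (resolvent B v) K"
    if "is_cone K" "0 \<in> K" "v \<le> t" "cone_preserving (resolvent B t) K"
  proof -
    have "cone_preserving E K"
      using that by (auto simp: cone_preserving_def E_def blinfun.scaleR_left intro: cone_scaleR)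
    then show ?thesis
      using perturbed(3) that by (simp add: resolvent_v)
  qed
qed

lemma norm_resolvent_le_double:
  fixes B :: "'a::banach \<Rightarrow>\<^sub>L 'a"
  assumes "spectral_radius B < t" and near: "\<bar>t - u\<bar> * norm (resolvent B t) \<le> 1 / 2"
  shows "norm (resolvent B u) \<le> 2 * norm (resolvent B t)"
proof -
  have "norm (resolvent B u) \<le> norm (resolvent B t) / (1 - \<bar>t - u\<bar> * norm (resolvent B t))"
    using resolvent_perturb(2)[OF resolvent_inverse[OF assms(1)]] near by simp
  also have "\<dots> \<le> norm (resolvent B t) / (1 / 2)"
    using near by (intro divide_left_mono) auto
  finally show ?thesis
    by simp
qed

lemma cone_preserving_resolvent_large:
  fixes B :: "'a::banach \<Rightarrow>\<^sub>L 'a"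
  assumes K: "is_cone K" "0 \<in> K" and pos: "cone_preserving B K" and t: "norm B < t"
  shows "cone_preserving (resolvent B t) K"
proof -
  have "0 < t"
    using t norm_ge_zero[of B] by linarith
  define R :: "'a \<Rightarrow>\<^sub>L 'a" where "R = (1 / t) *\<^sub>R id_blinfun"
  have inv: "is_inverse_blinfun R (t *\<^sub>R id_blinfun)"
    using \<open>0 < t\<close> by (intro is_inverse_blinfunI) (simp_all add: R_def blinfun.scaleR_left)
  have "norm R * norm B \<le> (1 / t) * norm B"
    using norm_blinfun_id_le[where 'a='a] \<open>0 < t\<close>
    by (intro mult_right_mono) (auto simp: R_def divide_right_mono)
  also have "\<dots> < 1"
    using t \<open>0 < t\<close> by (simp add: field_simps)
  finally have small: "norm R * norm B < 1" .
  have "cone_preserving R K"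
    using \<open>0 < t\<close> K by (auto simp: cone_preserving_def R_def blinfun.scaleR_left intro: cone_scaleR)
  with inverse_perturb[OF inv small] K pos show ?thesis
    by (simp add: resolvent_eqI)
qed

lemma cone_preserving_resolvent:
  fixes B :: "'a::banach \<Rightarrow>\<^sub>L 'a"
  assumes K: "is_cone K" "0 \<in> K" and pos: "cone_preserving B K" and s: "spectral_radius B < s"
  shows "cone_preserving (resolvent B s) K"
proof -
  \<comment> \<open>Positivity, known beyond norm B, is carried down to s in steps whose size is controlled
    by the norm of the resolvent at the infimum of the parameters where it holds.\<close>
  define D where "D = {t. s \<le> t \<and> cone_preserving (resolvent B t) K}"
  have "0 < s"
    using spectral_radius_nonneg[of B] s by linarith
  then have "norm B + s \<in> D"
    unfolding D_def using cone_preserving_resolvent_large[OF K pos] by simp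
  then have D: "D \<noteq> {}" "bdd_below D"
    by (blast, auto simp: D_def intro!: bdd_belowI[of _ s])
  define ts where "ts = Inf D"
  have "s \<le> ts"
    unfolding ts_def using D by (intro cInf_greatest) (auto simp: D_def)
  define M where "M = norm (resolvent B ts)"
  define h where "h = 1 / (4 * M + 2)"
  have "0 \<le> M" "0 < h"
    by (simp_all add: M_def h_def add_nonneg_pos)
  then obtain u where u: "u \<in> D" "u < ts + h / 2"
    using cInf_less_iff[OF D, of "ts + h / 2"] by (auto simp: ts_def)
  have "ts \<le> u"
    unfolding ts_def using u(1) D(2) by (rule cInf_lower)
  have "\<bar>ts - u\<bar> * M \<le> h / 2 * M"
    using u(2) \<open>ts \<le> u\<close> \<open>0 \<le> M\<close> by (intro mult_right_mono) auto
  also have "\<dots> \<le> 1 / 2"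
    using \<open>0 \<le> M\<close> by (simp add: h_def field_simps)
  finally have near: "\<bar>ts - u\<bar> * M \<le> 1 / 2" .
  have norm_u: "norm (resolvent B u) \<le> 2 * M"
    using s \<open>s \<le> ts\<close> near unfolding M_def by (intro norm_resolvent_le_double) simp_all
  define v where "v = max s (u - h)"
  have "\<bar>u - v\<bar> * norm (resolvent B u) \<le> h * (2 * M)"
    using u(1) \<open>0 < h\<close> norm_u by (intro mult_mono) (auto simp: v_def D_def)
  also have "\<dots> < 1"
    using \<open>0 \<le> M\<close> by (simp add: h_def field_simps)
  finally have small: "\<bar>u - v\<bar> * norm (resolvent B u) < 1" .
  have inv_u: "is_inverse_blinfun (resolvent B u) (u *\<^sub>R id_blinfun - B)"
    using s u(1) by (intro resolvent_inverse) (simp add: D_def)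
  have "v \<le> u"
    using u(1) \<open>0 < h\<close> by (simp add: v_def D_def)
  then have "cone_preserving (resolvent B v) K"
    using resolvent_perturb(3)[OF inv_u small K] u(1) by (simp add: D_def)
  then have "v \<in> D"
    by (simp add: D_def v_def)
  then have "ts \<le> v"
    unfolding ts_def using D(2) by (rule cInf_lower)
  then have "v = s"
    using u(2) \<open>0 < h\<close> by (auto simp: v_def)
  then show ?thesis
    using \<open>v \<in> D\<close> by (simp add: D_def)
qed

lemma is_inverse_blinfun_compose_resolvent:
  fixes T F W R :: "'a::real_normed_vector \<Rightarrow>\<^sub>L 'a"
  assumes W: "is_inverse_blinfun W (1 *\<^sub>R id_blinfun - T)"
    and R: "is_inverse_blinfun R (1 *\<^sub>R id_blinfun - (T + F))"
  shows "is_inverse_blinfun ((id_blinfun - T) o\<^sub>L R) (1 *\<^sub>R id_blinfun - (F o\<^sub>L W))"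
proof (rule is_inverse_blinfunI)
  have W_left: "W (y - T y) = y" and W_right: "W y - T (W y) = y" for y
    using is_inverse_blinfunD[OF W] by (simp_all add: blinfun_id_diff_apply)
  have R_left: "R (y - T y - F y) = y" and R_right: "R y - T (R y) - F (R y) = y" for y
    using is_inverse_blinfunD[OF R] by (simp_all add: blinfun_id_diff_apply blinfun.add_left diff_diff_eq)
  fix x
  have "R (x - F (W x)) = W x"
    using R_left[of "W x"] by (simp add: W_right)
  then show "((id_blinfun - T) o\<^sub>L R) ((1 *\<^sub>R id_blinfun - (F o\<^sub>L W)) x) = x"
    by (simp add: blinfun_id_diff_apply W_right)
  have "W (((id_blinfun - T) o\<^sub>L R) x) = R x"
    by (simp add: blinfun_id_diff_apply W_left)
  then show "(1 *\<^sub>R id_blinfun - (F o\<^sub>L W)) (((id_blinfun - T) o\<^sub>L R) x) = x"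
    using R_right[of x] by (simp add: blinfun_id_diff_apply algebra_simps)
qed

lemma is_inverse_blinfun_shift_add:
  fixes T F W P :: "'a::real_normed_vector \<Rightarrow>\<^sub>L 'a"
  assumes W: "is_inverse_blinfun W (l *\<^sub>R id_blinfun - T)"
    and P: "is_inverse_blinfun P (1 *\<^sub>R id_blinfun - (F o\<^sub>L W))"
  shows "is_inverse_blinfun (W o\<^sub>L P) (l *\<^sub>R id_blinfun - (T + F))"
proof (rule is_inverse_blinfunI)
  have W_left: "W (l *\<^sub>R y - T y) = y" and W_right: "l *\<^sub>R W y - T (W y) = y" for y
    using is_inverse_blinfunD[OF W] by simp_all
  have P_left: "P (y - F (W y)) = y" and P_right: "P y - F (W (P y)) = y" for y
    using is_inverse_blinfunD[OF P] by (simp_all add: blinfun_id_diff_apply)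
  fix x
  have "l *\<^sub>R x - (T + F) x = (l *\<^sub>R x - T x) - F (W (l *\<^sub>R x - T x))"
    by (simp add: W_left blinfun.add_left)
  then have "(W o\<^sub>L P) ((l *\<^sub>R id_blinfun - (T + F)) x) = W (P ((l *\<^sub>R x - T x) - F (W (l *\<^sub>R x - T x))))"
    by (simp only: blinfun_shift_apply blinfun_apply_blinfun_compose)
  also have "\<dots> = x"
    by (subst P_left) (rule W_left)
  finally show "(W o\<^sub>L P) ((l *\<^sub>R id_blinfun - (T + F)) x) = x" .
  show "(l *\<^sub>R id_blinfun - (T + F)) ((W o\<^sub>L P) x) = x"
    using W_right[of "P x"] P_right[of x] by (simp add: blinfun.add_left algebra_simps)
qed

lemma resolvent_difference:
  fixes T W W' :: "'a::real_normed_vector \<Rightarrow>\<^sub>L 'a"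
  assumes W: "is_inverse_blinfun W (1 *\<^sub>R id_blinfun - T)"
    and W': "is_inverse_blinfun W' (l *\<^sub>R id_blinfun - T)" and "l \<noteq> 0"
  shows "(1 / l) *\<^sub>R W x - W' x = ((l - 1) / l) *\<^sub>R W' (T (W x))"
proof -
  have "l *\<^sub>R ((1 / l) *\<^sub>R W x - W' x) - T ((1 / l) *\<^sub>R W x - W' x) = ((l - 1) / l) *\<^sub>R T (W x)"
    using is_inverse_blinfunD(2)[OF W, of x] is_inverse_blinfunD(2)[OF W', of x] \<open>l \<noteq> 0\<close>
    by (simp add: blinfun_id_diff_apply blinfun.diff_right blinfun.scaleR_right algebra_simps
        diff_divide_distrib)
  then show ?thesis
    using is_inverse_blinfunD(1)[OF W'] by (metis blinfun_shift_apply blinfun.scaleR_right)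
qed

section \<open>Domination of powers\<close>

lemma pow_diff_mem_cone:
  assumes K: "is_cone K" "0 \<in> K" and pos: "cone_preserving B K" "cone_preserving (C - B) K"
    and x: "x \<in> K"
  shows "blinfun_pow C n x - blinfun_pow B n x \<in> K"
proof (induction n)
  case (Suc n)
  have "blinfun_pow C (Suc n) x - blinfun_pow B (Suc n) x
      = (C - B) (blinfun_pow C n x - blinfun_pow B n x) + (C - B) (blinfun_pow B n x)
        + B (blinfun_pow C n x - blinfun_pow B n x)"
    by (simp add: blinfun.diff_left blinfun.diff_right algebra_simps)
  also have "\<dots> \<in> K"
    using Suc pos x cone_preserving_pow[OF pos(1) x]
    by (intro cone_add[OF K(1)]) (auto simp: cone_preserving_def)
  finally show ?case .
qed (simp add: K)

lemma inverse_expansion: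
  assumes inv: "is_inverse_blinfun R (s *\<^sub>R id_blinfun - C)" and "s \<noteq> 0"
  shows "R y = (\<Sum>k<N. (1 / s ^ Suc k) *\<^sub>R blinfun_pow C k y) + (1 / s ^ N) *\<^sub>R blinfun_pow C N (R y)"
proof (induction N)
  case (Suc N)
  have "s *\<^sub>R R y = y + C (R y)"
    using is_inverse_blinfunD(2)[OF inv, of y] by (simp add: algebra_simps)
  then have "(1 / s) *\<^sub>R (s *\<^sub>R R y) = (1 / s) *\<^sub>R (y + C (R y))"
    by (rule arg_cong)
  then have "R y = (1 / s) *\<^sub>R y + (1 / s) *\<^sub>R C (R y)"
    using \<open>s \<noteq> 0\<close> by (simp add: scaleR_add_right)
  then have "blinfun_pow C N (R y) = blinfun_pow C N ((1 / s) *\<^sub>R y + (1 / s) *\<^sub>R C (R y))"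
    by (rule arg_cong)
  then have tail: "(1 / s ^ N) *\<^sub>R blinfun_pow C N (R y)
      = (1 / s ^ Suc N) *\<^sub>R blinfun_pow C N y + (1 / s ^ Suc N) *\<^sub>R blinfun_pow C (Suc N) (R y)"
    by (simp add: blinfun.add_right blinfun.scaleR_right scaleR_add_right blinfun_pow_Suc' mult.commute
        del: blinfun_pow_Suc)
  have "R y = (\<Sum>k<N. (1 / s ^ Suc k) *\<^sub>R blinfun_pow C k y) + (1 / s ^ N) *\<^sub>R blinfun_pow C N (R y)"
    by (rule Suc.IH)
  also note tail
  also have "(\<Sum>k<N. (1 / s ^ Suc k) *\<^sub>R blinfun_pow C k y)
      + ((1 / s ^ Suc N) *\<^sub>R blinfun_pow C N y + (1 / s ^ Suc N) *\<^sub>R blinfun_pow C (Suc N) (R y))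
    = (\<Sum>k<Suc N. (1 / s ^ Suc k) *\<^sub>R blinfun_pow C k y) + (1 / s ^ Suc N) *\<^sub>R blinfun_pow C (Suc N) (R y)"
    by (simp only: sum.lessThan_Suc add.assoc)
  finally show ?case .
qed simp

lemma pow_le_inverse:
  assumes K: "is_cone K" "0 \<in> K" and pos: "cone_preserving C K" "cone_preserving R K"
    and inv: "is_inverse_blinfun R (s *\<^sub>R id_blinfun - C)" and s: "0 < s" and x: "x \<in> K"
  shows "R x - (1 / s ^ Suc n) *\<^sub>R blinfun_pow C n x \<in> K"
proof -
  have "R x - (1 / s ^ Suc n) *\<^sub>R blinfun_pow C n x
      = ((\<Sum>k<Suc n. (1 / s ^ Suc k) *\<^sub>R blinfun_pow C k x)
          + (1 / s ^ Suc n) *\<^sub>R blinfun_pow C (Suc n) (R x)) - (1 / s ^ Suc n) *\<^sub>R blinfun_pow C n x"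
    using inverse_expansion[OF inv, of x "Suc n"] s by (intro arg_cong[where f = "\<lambda>r. r - _"]) simp
  also have "\<dots> = (\<Sum>k<n. (1 / s ^ Suc k) *\<^sub>R blinfun_pow C k x)
      + (1 / s ^ Suc n) *\<^sub>R blinfun_pow C (Suc n) (R x)"
    by (simp only: sum.lessThan_Suc) (simp add: algebra_simps)
  also have "\<dots> \<in> K"
    using s x pos cone_preserving_pow[OF pos(1)]
    by (intro cone_add[OF K(1)] cone_sum[OF K] cone_scaleR[OF K(1)]) (auto simp: cone_preserving_def)
  finally show ?thesis .
qed

lemma uniform_boundedness_generating_cone:
  fixes f :: "nat \<Rightarrow> ('a::banach \<Rightarrow>\<^sub>L 'b::real_normed_vector)"
  assumes "generating_cone K" and bounded: "\<And>x. x \<in> K \<Longrightarrow> \<exists>c. \<forall>n. norm (f n x) \<le> c"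
  shows "\<exists>c. \<forall>n. norm (f n) \<le> c"
proof (rule uniform_boundedness)
  fix x
  obtain u v where uv: "u \<in> K" "v \<in> K" "x = u - v"
    using assms(1) unfolding generating_cone_def by blast
  obtain cu cv where "\<forall>n. norm (f n u) \<le> cu" "\<forall>n. norm (f n v) \<le> cv"
    using bounded uv by meson
  moreover have "norm (f n x) \<le> norm (f n u) + norm (f n v)" for n
    using norm_triangle_ineq4[of "f n u" "f n v"] by (simp add: uv(3) blinfun.diff_right)
  ultimately have "norm (f n x) \<le> cu + cv" for n
    by (meson add_mono order_trans)
  then show "\<exists>c. \<forall>n. norm (f n x) \<le> c"
    by blast
qed

section \<open>Positive operators on a normal generating cone\<close>

locale normal_generating_cone =
  fixes K :: "'a::banach set"
  assumes cone: "is_cone K" and generating: "generating_cone K" and normal: "normal_cone K"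
begin

lemma zero_mem: "0 \<in> K"
  using zero_mem_generating_cone cone generating by blast

lemma pow_bound_of_cone_preserving_inverse:
  fixes B C R :: "'a \<Rightarrow>\<^sub>L 'a"
  assumes pos: "cone_preserving B K" "cone_preserving (C - B) K" "cone_preserving R K"
    and inv: "is_inverse_blinfun R (s *\<^sub>R id_blinfun - C)" and s: "0 < s"
  shows "\<exists>c. \<forall>n. norm (blinfun_pow B n) \<le> c * s ^ n"
proof -
  obtain \<gamma> where \<gamma>: "\<gamma> > 0" "\<And>x y. x \<in> K \<Longrightarrow> y - x \<in> K \<Longrightarrow> norm x \<le> \<gamma> * norm y"
    using normal unfolding normal_cone_def by blast
  have "cone_preserving C K"
    using cone_preserving_add[OF cone pos(1,2)] by simp
  have "\<exists>c. \<forall>n. norm ((1 / s ^ n) *\<^sub>R blinfun_pow B n) \<le> c"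
  proof (rule uniform_boundedness_generating_cone[OF generating])
    fix x assume x: "x \<in> K"
    have "norm ((1 / s ^ n) *\<^sub>R blinfun_pow B n x) \<le> \<gamma> * \<gamma> * s * norm (R x)" for n
    proof -
      have "(1 / s ^ Suc n) *\<^sub>R blinfun_pow C n x \<in> K"
        using s cone_preserving_pow[OF \<open>cone_preserving C K\<close> x] by (simp add: cone_scaleR[OF cone])
      then have "norm ((1 / s ^ Suc n) *\<^sub>R blinfun_pow C n x) \<le> \<gamma> * norm (R x)"
        using \<gamma>(2) pow_le_inverse[OF cone zero_mem \<open>cone_preserving C K\<close> pos(3) inv s x] by blast
      then have "norm (blinfun_pow C n x) \<le> \<gamma> * norm (R x) * s ^ Suc n"
        using s by (simp add: field_simps)
      moreover have "norm (blinfun_pow B n x) \<le> \<gamma> * norm (blinfun_pow C n x)"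
        using \<gamma>(2) cone_preserving_pow[OF pos(1) x] pow_diff_mem_cone[OF cone zero_mem pos(1,2) x]
        by blast
      ultimately have "norm (blinfun_pow B n x) \<le> \<gamma> * (\<gamma> * norm (R x) * s ^ Suc n)"
        using \<gamma>(1) by (meson mult_left_mono less_imp_le order_trans)
      then show ?thesis
        using s by (simp add: field_simps)
    qed
    then show "\<exists>c. \<forall>n. norm (((1 / s ^ n) *\<^sub>R blinfun_pow B n) x) \<le> c"
      by (auto simp: blinfun.scaleR_left)
  qed
  then obtain c where "\<And>n. norm ((1 / s ^ n) *\<^sub>R blinfun_pow B n) \<le> c"
    by blast
  then have "norm (blinfun_pow B n) \<le> c * s ^ n" for n
    using s by (simp add: field_simps)
  then show ?thesis
    by blast
qed

lemma spectral_radius_less_of_cone_preserving_inverse: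
  fixes B R :: "'a \<Rightarrow>\<^sub>L 'a"
  assumes pos: "cone_preserving B K" "cone_preserving R K"
    and inv: "is_inverse_blinfun R (s *\<^sub>R id_blinfun - B)" and s: "0 < s"
  shows "spectral_radius B < s"
proof -
  define h where "h = min (s / 2) (1 / (2 * (norm R + 1)))"
  have h: "0 < h" "h \<le> s / 2" "h * norm R < 1"
  proof -
    have "0 < 2 * norm R + 2"
      using norm_ge_zero[of R] by linarith
    then show "0 < h" "h \<le> s / 2"
      using s by (auto simp: h_def)
    have "h * norm R \<le> (1 / (2 * (norm R + 1))) * norm R"
      by (intro mult_right_mono) (auto simp: h_def)
    also have "\<dots> < 1"
      using \<open>0 < 2 * norm R + 2\<close> by (simp add: field_simps)
    finally show "h * norm R < 1" .
  qed
  \<comment> \<open>Positivity survives the step down to s - h, where the domination bound applies.\<close>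
  note inv_s = inv[folded resolvent_eqI[OF inv]]
  have small: "\<bar>s - (s - h)\<bar> * norm (resolvent B s) < 1"
    using h by (simp add: resolvent_eqI[OF inv])
  have "cone_preserving (resolvent B (s - h)) K"
    using resolvent_perturb(3)[OF inv_s small cone zero_mem] pos(2) h by (simp add: resolvent_eqI[OF inv])
  moreover have "cone_preserving (B - B) K"
    by (simp add: cone_preserving_def zero_mem)
  ultimately obtain c where "\<And>n. norm (blinfun_pow B n) \<le> c * (s - h) ^ n"
    using pow_bound_of_cone_preserving_inverse[OF pos(1) _ _ resolvent_perturb(1)[OF inv_s small]] h s
    by auto
  then have "spectral_radius B \<le> s - h"
    by (rule spectral_radius_le_pow_bound) (use h in auto)
  then show ?thesis
    using h by simp
qed

lemma spectral_radius_mono: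
  fixes B C :: "'a \<Rightarrow>\<^sub>L 'a"
  assumes pos: "cone_preserving B K" "cone_preserving (C - B) K"
  shows "spectral_radius B \<le> spectral_radius C"
proof (rule dense_ge)
  fix s assume s: "spectral_radius C < s"
  then have "0 < s"
    using spectral_radius_nonneg[of C] by linarith
  have "cone_preserving C K"
    using cone_preserving_add[OF cone pos] by simp
  then obtain c where "\<And>n. norm (blinfun_pow B n) \<le> c * s ^ n"
    using pow_bound_of_cone_preserving_inverse[OF pos _ resolvent_inverse[OF s] \<open>0 < s\<close>]
      cone_preserving_resolvent[OF cone zero_mem _ s] by blast
  then show "spectral_radius B \<le> s"
    by (rule spectral_radius_le_pow_bound) (use \<open>0 < s\<close> in simp)
qed

lemma spectral_radius_compose_resolvent_less_one:
  fixes T F :: "'a \<Rightarrow>\<^sub>L 'a"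
  assumes pos: "cone_preserving T K" "cone_preserving F K"
    and "spectral_radius T < 1" and "spectral_radius (T + F) < 1"
  shows "spectral_radius (F o\<^sub>L resolvent T 1) < 1"
proof -
  define W where "W = resolvent T 1"
  define R where "R = resolvent (T + F) 1"
  have "cone_preserving W K" "cone_preserving R K"
    unfolding W_def R_def using assms cone_preserving_add[OF cone pos]
    by (auto intro!: cone_preserving_resolvent[OF cone zero_mem])
  have R_right: "R x - T (R x) = x + F (R x)" for x
    using is_inverse_blinfunD(2)[OF resolvent_inverse[OF assms(4)], of x]
    by (simp add: R_def blinfun_id_diff_apply blinfun.add_left algebra_simps)
  have "cone_preserving ((id_blinfun - T) o\<^sub>L R) K"
    using pos(2) \<open>cone_preserving R K\<close>
    by (auto simp: cone_preserving_def blinfun_id_diff_apply R_right intro: cone_add[OF cone])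
  then show ?thesis
    using is_inverse_blinfun_compose_resolvent[OF resolvent_inverse[OF assms(3)] resolvent_inverse[OF assms(4)]]
      cone_preserving_compose[OF pos(2) \<open>cone_preserving W K\<close>]
    by (intro spectral_radius_less_of_cone_preserving_inverse) (simp_all add: W_def R_def)
qed

lemma spectral_radius_add_le_one:
  fixes T F :: "'a \<Rightarrow>\<^sub>L 'a"
  assumes pos: "cone_preserving T K" "cone_preserving F K"
    and "spectral_radius T < 1" and "spectral_radius (F o\<^sub>L resolvent T 1) \<le> 1"
  shows "spectral_radius (T + F) \<le> 1"
proof (rule dense_ge)
  fix l :: real assume "1 < l"
  then have "spectral_radius T < l"
    using assms(3) by simp
  define W where "W = resolvent T 1"
  define Wl where "Wl = resolvent T l"
  note inv_W = resolvent_inverse[OF assms(3), folded W_def]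
    and inv_Wl = resolvent_inverse[OF \<open>spectral_radius T < l\<close>, folded Wl_def]
  have "cone_preserving W K" "cone_preserving Wl K"
    unfolding W_def Wl_def using assms \<open>spectral_radius T < l\<close>
    by (auto intro!: cone_preserving_resolvent[OF cone zero_mem])
  have "l \<noteq> 0"
    using \<open>1 < l\<close> by simp
  have "cone_preserving ((1 / l) *\<^sub>R (F o\<^sub>L W) - (F o\<^sub>L Wl)) K"
    unfolding cone_preserving_def
  proof
    fix x assume "x \<in> K"
    have "((1 / l) *\<^sub>R (F o\<^sub>L W) - (F o\<^sub>L Wl)) x = F ((1 / l) *\<^sub>R W x - Wl x)"
      by (simp add: blinfun.diff_left blinfun.scaleR_left blinfun.diff_right blinfun.scaleR_right)
    also have "\<dots> = F (((l - 1) / l) *\<^sub>R Wl (T (W x)))"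
      by (simp only: resolvent_difference[OF inv_W inv_Wl \<open>l \<noteq> 0\<close>])
    also have "\<dots> \<in> K"
      using pos \<open>cone_preserving W K\<close> \<open>cone_preserving Wl K\<close> \<open>1 < l\<close> \<open>x \<in> K\<close>
      by (intro cone_preservingD[of F] cone_scaleR[OF cone]) (auto simp: cone_preserving_def)
    finally show "((1 / l) *\<^sub>R (F o\<^sub>L W) - (F o\<^sub>L Wl)) x \<in> K" .
  qed
  moreover have "cone_preserving (F o\<^sub>L Wl) K"
    using pos(2) \<open>cone_preserving Wl K\<close> by (rule cone_preserving_compose)
  ultimately have "spectral_radius (F o\<^sub>L Wl) \<le> spectral_radius ((1 / l) *\<^sub>R (F o\<^sub>L W))"
    by (intro spectral_radius_mono)
  also have "\<dots> \<le> 1 / l * spectral_radius (F o\<^sub>L W)"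
    using \<open>1 < l\<close> by (intro spectral_radius_scaleR_le) simp
  also have "\<dots> < 1"
    using assms(4) \<open>1 < l\<close> by (simp add: W_def field_simps)
  finally have "spectral_radius (F o\<^sub>L Wl) < 1" .
  with \<open>cone_preserving (F o\<^sub>L Wl) K\<close> have "cone_preserving (resolvent (F o\<^sub>L Wl) 1) K"
    by (rule cone_preserving_resolvent[OF cone zero_mem])
  then have "cone_preserving (Wl o\<^sub>L resolvent (F o\<^sub>L Wl) 1) K"
    by (rule cone_preserving_compose[OF \<open>cone_preserving Wl K\<close>])
  then have "spectral_radius (T + F) < l"
    using is_inverse_blinfun_shift_add[OF inv_Wl resolvent_inverse[OF \<open>spectral_radius (F o\<^sub>L Wl) < 1\<close>]]
      cone_preserving_add[OF cone pos] \<open>1 < l\<close>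
    by (intro spectral_radius_less_of_cone_preserving_inverse) simp_all
  then show "spectral_radius (T + F) \<le> l"
    by simp
qed

end

theorem lemma3p1:
  fixes K :: "'a::banach set" and A T F :: "'a \<Rightarrow>\<^sub>L 'a"
  assumes "is_cone K" and "generating_cone K" and "normal_cone K"
    and "cone_preserving A K"
    and "A = T + F"
    and "cone_preserving T K" and "cone_preserving F K"
    and "spectral_radius T < 1"
    and "spectral_radius (F o\<^sub>L op_inverse (id_blinfun - T)) > 0"
  shows "spectral_radius (T + (1 / spectral_radius (F o\<^sub>L op_inverse (id_blinfun - T))) *\<^sub>R F) = 1"
proof -
  interpret normal_generating_cone K
    using assms(1-3) by unfold_locales
  define \<rho> where "\<rho> = spectral_radius (F o\<^sub>L resolvent T 1)"
  have "\<rho> > 0"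
    using assms(9) by (simp add: \<rho>_def resolvent_def)
  define F' where "F' = (1 / \<rho>) *\<^sub>R F"
  have "cone_preserving F' K"
    unfolding F'_def using assms(7) \<open>\<rho> > 0\<close> by (simp add: cone_preserving_scaleR[OF cone])
  have F'_resolvent: "F' o\<^sub>L resolvent T 1 = (1 / \<rho>) *\<^sub>R (F o\<^sub>L resolvent T 1)"
    by (auto intro!: blinfun_eqI simp: F'_def blinfun.scaleR_left)
  have "spectral_radius (F' o\<^sub>L resolvent T 1) \<le> 1 / \<rho> * spectral_radius (F o\<^sub>L resolvent T 1)"
    unfolding F'_resolvent using \<open>\<rho> > 0\<close> by (intro spectral_radius_scaleR_le) simp
  then have "spectral_radius (F' o\<^sub>L resolvent T 1) \<le> 1"
    using \<open>\<rho> > 0\<close> by (simp flip: \<rho>_def)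
  with assms(6) \<open>cone_preserving F' K\<close> assms(8) have "spectral_radius (T + F') \<le> 1"
    by (rule spectral_radius_add_le_one)
  moreover have "\<not> spectral_radius (T + F') < 1"
  proof
    assume "spectral_radius (T + F') < 1"
    with assms(6) \<open>cone_preserving F' K\<close> assms(8) have "spectral_radius (F' o\<^sub>L resolvent T 1) < 1"
      by (rule spectral_radius_compose_resolvent_less_one)
    have "\<rho> *\<^sub>R (F' o\<^sub>L resolvent T 1) = F o\<^sub>L resolvent T 1"
      using \<open>\<rho> > 0\<close> by (simp add: F'_resolvent)
    then have "\<rho> \<le> \<rho> * spectral_radius (F' o\<^sub>L resolvent T 1)"
      using spectral_radius_scaleR_le[OF \<open>\<rho> > 0\<close>, of "F' o\<^sub>L resolvent T 1"] by (simp flip: \<rho>_def)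
    with \<open>spectral_radius (F' o\<^sub>L resolvent T 1) < 1\<close> \<open>\<rho> > 0\<close> show False
      by simp
  qed
  ultimately show ?thesis
    by (simp add: F'_def \<rho>_def resolvent_def)
qed

end
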